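(* Let $n\geq 3$ and let $S_n$ be the star graph with vertices $a_1,\dots,a_n$ and center $a_1$. For every $f:V\to\mathbb{R}$, $${\rm Var}_2 M_{S_n}f\leq \frac{\left((n-1)^2+n-2\right)^{1/2}}{n}\,{\rm Var}_2 f.$$ Moreover, the constant $\frac{((n-1)^2+n-2)^{1/2}}{n}$ is optimal, i.e. it cannot be replaced by any smaller constant.
   Context: For a finite connected graph $G=(V,E)$ with graph distance $d_G$ and $f:V\to\mathbb{R}$, $M_Gf(v)=\sup_{r\geq 0}\frac{1}{|B(v,r)|}\sum_{u\in B(v,r)}|f(u)|$, where $B(v,r)=\{u\in V: d_G(u,v)\le r\}$. For $g:V\to\mathbb{R}$ and $p>0$, ${\rm Var}_p g=\left(\sum_{\{v_1,v_2\}\in E}|g(v_1)-g(v_2)|^p\right)^{1/p}$. The star graph $S_n$ has vertex set $V=\{a_1,\dots,a_n\}$ and edges exactly between $a_1$ and each $a_i$, $i\ge 2$. *)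

theory Defs
  imports "HOL-Analysis.Analysis"
begin

text \<open>Simple graphs: a vertex set V and an edge set E of 2-element subsets of V.\<close>

definition is_walk :: "'a set set \<Rightarrow> 'a list \<Rightarrow> bool" where
  "is_walk E xs \<longleftrightarrow> xs \<noteq> [] \<and> (\<forall>i. Suc i < length xs \<longrightarrow> {xs ! i, xs ! Suc i} \<in> E)"

definition graph_dist :: "'a set set \<Rightarrow> 'a \<Rightarrow> 'a \<Rightarrow> nat" where
  "graph_dist E u v = (LEAST k. \<exists>xs. is_walk E xs \<and> length xs = Suc k \<and> hd xs = u \<and> last xs = v)"

definition graph_ball :: "'a set \<Rightarrow> 'a set set \<Rightarrow> 'a \<Rightarrow> real \<Rightarrow> 'a set" where
  "graph_ball V E v r = {u \<in> V. real (graph_dist E u v) \<le> r}"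

definition maximal_op :: "'a set \<Rightarrow> 'a set set \<Rightarrow> ('a \<Rightarrow> real) \<Rightarrow> 'a \<Rightarrow> real" where
  "maximal_op V E f v =
     (SUP r \<in> {0..}. (\<Sum>u \<in> graph_ball V E v r. \<bar>f u\<bar>) / real (card (graph_ball V E v r)))"

definition edge_diff :: "('a \<Rightarrow> real) \<Rightarrow> 'a set \<Rightarrow> real" where
  "edge_diff g e = (THE d. \<exists>a b. e = {a, b} \<and> d = \<bar>g a - g b\<bar>)"

definition var_p :: "'a set set \<Rightarrow> real \<Rightarrow> ('a \<Rightarrow> real) \<Rightarrow> real" where
  "var_p E p g = (\<Sum>e \<in> E. edge_diff g e powr p) powr (1 / p)"

text \<open>Star graph S_n on vertices a_1..a_n, represented as 1..n, centre 1.\<close>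
definition star_V :: "nat \<Rightarrow> nat set" where
  "star_V n = {1..n}"

definition star_E :: "nat \<Rightarrow> nat set set" where
  "star_E n = {{1, i} | i. i \<in> {2..n}}"

end

theory Submission
  imports Defs
begin

text \<open>On the star graph the maximal function is explicit: with \<open>a = \<bar>f a\<^sub>1\<bar>\<close>,
  \<open>b\<^sub>i = \<bar>f a\<^sub>i\<bar>\<close> and \<open>A\<close> the mean of \<open>\<bar>f\<bar>\<close>, it equals \<open>max a A\<close> at the centre and
  \<open>max b\<^sub>i ((a + b\<^sub>i)/2) A\<close> at a leaf. As \<open>\<bar>a - b\<^sub>i\<bar> \<le> \<bar>f a\<^sub>1 - f a\<^sub>i\<bar>\<close>, it suffices
  to bound \<open>\<Sum>\<^sub>i (M f a\<^sub>1 - M f a\<^sub>i)\<^sup>2\<close> by \<open>(n\<^sup>2 - n - 1)/n\<^sup>2 \<Sum>\<^sub>i (a - b\<^sub>i)\<^sup>2\<close>.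
  If \<open>a \<le> A\<close>, the summands are the squared positive parts of \<open>b\<^sub>i - A\<close>, whose sum is
  \<open>A - a\<close>, and Cauchy--Schwarz on the leaves below \<open>A\<close> gives the bound. If \<open>A < a\<close>, leaves
  with \<open>b\<^sub>i \<ge> a\<close> contribute \<open>(a - b\<^sub>i)\<^sup>2\<close> to both sides, the others at most
  \<open>min ((a - A)\<^sup>2) ((a - b\<^sub>i)\<^sup>2/4)\<close> on the left, and a quadratic estimate in the total
  deviations above and below \<open>a\<close> concludes. Equality holds for
  \<open>f = (n - 1, 2(n - 1), n - 2, \<dots>, n - 2)\<close>.\<close>

lemma star_constant_pos:
  fixes n :: real
  assumes "3 \<le> n"
  shows "0 < n\<^sup>2 - n - 1"
proof -
  have "3 * n \<le> n * n"
    using assms by (intro mult_right_mono) auto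
  then show ?thesis
    unfolding power2_eq_square using assms by linarith
qed

lemma sum_power2_le_power2_sum:
  fixes f :: "'a \<Rightarrow> 'b::linordered_idom"
  assumes "finite S" "\<And>i. i \<in> S \<Longrightarrow> 0 \<le> f i"
  shows "(\<Sum>i\<in>S. (f i)\<^sup>2) \<le> (\<Sum>i\<in>S. f i)\<^sup>2"
  using assms
proof (induction S rule: finite_induct)
  case (insert x S)
  then have "0 \<le> 2 * f x * sum f S"
    by (simp add: sum_nonneg)
  with insert show ?case
    by (simp add: power2_eq_square algebra_simps)
qed simp

text \<open>Cauchy--Schwarz in the form \<open>(y + (x - y))\<^sup>2 \<le> (r + 1/j) (y\<^sup>2/r + j (x - y)\<^sup>2)\<close>,
  cleared of denominators.\<close>
lemma cauchy_schwarz_split: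
  fixes x y q j r :: real
  assumes "0 < r" "0 < j" "y\<^sup>2 \<le> r * q"
  shows "j * x\<^sup>2 \<le> (j * r + 1) * (q + j * (x - y)\<^sup>2)"
proof -
  have "(j * r + 1) * (y\<^sup>2 + j * r * (x - y)\<^sup>2) - j * r * x\<^sup>2 = (j * r * x - (j * r + 1) * y)\<^sup>2"
    by (simp add: power2_eq_square algebra_simps)
  then have "j * r * x\<^sup>2 \<le> (j * r + 1) * (y\<^sup>2 + j * r * (x - y)\<^sup>2)"
    by (metis diff_ge_0_iff_ge zero_le_power2)
  also have "\<dots> \<le> (j * r + 1) * (r * q + j * r * (x - y)\<^sup>2)"
    using assms by (intro mult_left_mono) auto
  finally have "r * (j * x\<^sup>2) \<le> r * ((j * r + 1) * (q + j * (x - y)\<^sup>2))"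
    by (simp add: algebra_simps)
  then show ?thesis
    using assms(1) by simp
qed

lemma sum_positive_part_power2_le:
  fixes e :: "'i \<Rightarrow> real"
  assumes "finite I" "2 \<le> card I"
  defines "n \<equiv> real (card I) + 1"
  shows "n\<^sup>2 * (\<Sum>i\<in>I. (max (e i) 0)\<^sup>2)
    \<le> (n\<^sup>2 - n - 1) * ((\<Sum>i\<in>I. (e i)\<^sup>2) + (n + 1) * (sum e I)\<^sup>2)"
proof -
  define P where "P = {i \<in> I. 0 < e i}"
  define Q where "Q = I - P"
  define p where "p = (\<Sum>i\<in>P. (e i)\<^sup>2)"
  define q where "q = (\<Sum>i\<in>Q. (e i)\<^sup>2)"
  define x where "x = sum e P"
  define y where "y = - sum e Q"
  have split: "sum g I = sum g P + sum g Q" for g :: "'i \<Rightarrow> real"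
    using sum.subset_diff[of P I g] assms(1) by (auto simp: P_def Q_def add.commute)
  have finite: "finite P" "finite Q"
    using assms(1) by (auto simp: P_def Q_def)
  have n3: "3 \<le> n"
    using assms(2) by (simp add: n_def)
  have K: "n\<^sup>2 - n - 1 = (n + 1) * (n - 2) + 1"
    by (simp add: power2_eq_square algebra_simps)
  have K_nonneg: "0 \<le> n\<^sup>2 - n - 1"
    using star_constant_pos[OF n3] by simp
  have "(\<Sum>i\<in>P. (max (e i) 0)\<^sup>2) = p" "(\<Sum>i\<in>Q. (max (e i) 0)\<^sup>2) = 0"
    by (auto simp: p_def P_def Q_def intro: sum.cong sum.neutral)
  then have "(\<Sum>i\<in>I. (max (e i) 0)\<^sup>2) = p"
    unfolding split by simp
  moreover have "(\<Sum>i\<in>I. (e i)\<^sup>2) = p + q" "sum e I = x - y"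
    unfolding split p_def q_def x_def y_def by simp_all
  moreover have "n\<^sup>2 * p \<le> (n\<^sup>2 - n - 1) * (p + q + (n + 1) * (x - y)\<^sup>2)"
  proof (cases "P = {}")
    case True
    then have "p = 0"
      by (simp add: p_def)
    moreover have "0 \<le> q"
      by (simp add: q_def sum_nonneg)
    ultimately show ?thesis
      using K_nonneg n3 by (simp add: p_def q_def x_def y_def sum_nonneg)
  next
    case False
    then have "card Q < card I"
      unfolding Q_def using assms(1) by (intro psubset_card_mono) (auto simp: P_def)
    then have "real (card Q) \<le> n - 2"
      by (simp add: n_def)
    moreover have "y\<^sup>2 \<le> real (card Q) * q"
      using sum_squared_le_sum_of_squares[of e Q] by (simp add: y_def q_def mult.commute)
    moreover have "0 \<le> q"
      by (simp add: q_def sum_nonneg)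
    ultimately have "y\<^sup>2 \<le> (n - 2) * q"
      by (meson mult_right_mono order_trans)
    then have x_bound: "(n + 1) * x\<^sup>2 \<le> (n\<^sup>2 - n - 1) * (q + (n + 1) * (x - y)\<^sup>2)"
      unfolding K using n3 by (intro cauchy_schwarz_split) auto
    have "p \<le> x\<^sup>2"
      unfolding p_def x_def using finite by (intro sum_power2_le_power2_sum) (auto simp: P_def)
    have "n\<^sup>2 * p = (n + 1) * p + (n\<^sup>2 - n - 1) * p"
      by (simp add: power2_eq_square algebra_simps)
    also have "\<dots> \<le> (n + 1) * x\<^sup>2 + (n\<^sup>2 - n - 1) * p"
      using \<open>p \<le> x\<^sup>2\<close> n3 by simp
    also have "\<dots> \<le> (n\<^sup>2 - n - 1) * (p + q + (n + 1) * (x - y)\<^sup>2)"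
      using x_bound by (simp add: algebra_simps)
    finally show ?thesis .
  qed
  ultimately show ?thesis
    by simp
qed

lemma center_dominant_estimate:
  fixes n m x y p q T :: real
  assumes "3 \<le> n" "0 < m" "m \<le> n - 2" "0 \<le> x" "x \<le> y"
    and "p \<le> x\<^sup>2" "y\<^sup>2 \<le> m * q" "n\<^sup>2 * T \<le> m * (y - x)\<^sup>2"
  shows "(n + 1) * p + n\<^sup>2 * T \<le> (n\<^sup>2 - n - 1) * q"
proof -
  define K where "K = n\<^sup>2 - n - 1"
  have K_nonneg: "0 \<le> K"
    using star_constant_pos[OF assms(1)] by (simp add: K_def)
  have "0 \<le> x\<^sup>2 + 2 * K * (x * (y - x)) + (3 * n - 5) * (y - x)\<^sup>2"
    using assms(1,4,5) K_nonneg by (intro add_nonneg_nonneg mult_nonneg_nonneg) auto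
  moreover have "K * y\<^sup>2 - ((n - 2) * (n + 1) * x\<^sup>2 + (n - 2)\<^sup>2 * (y - x)\<^sup>2)
      = x\<^sup>2 + 2 * K * (x * (y - x)) + (3 * n - 5) * (y - x)\<^sup>2"
    by (simp add: K_def power2_eq_square algebra_simps)
  ultimately have worst_case: "(n - 2) * (n + 1) * x\<^sup>2 + (n - 2)\<^sup>2 * (y - x)\<^sup>2 \<le> K * y\<^sup>2"
    by linarith
  have "m * ((n + 1) * p + n\<^sup>2 * T) \<le> m * ((n + 1) * x\<^sup>2) + m * (m * (y - x)\<^sup>2)"
    unfolding distrib_left using assms(1,2,6,8) by (intro add_mono mult_left_mono) auto
  also have "\<dots> = m * (n + 1) * x\<^sup>2 + m\<^sup>2 * (y - x)\<^sup>2"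
    by (simp add: power2_eq_square)
  also have "\<dots> \<le> (n - 2) * (n + 1) * x\<^sup>2 + (n - 2)\<^sup>2 * (y - x)\<^sup>2"
    using assms(1-3) by (intro add_mono mult_right_mono power_mono) auto
  also have "\<dots> \<le> K * (m * q)"
    using worst_case assms(7) K_nonneg by (meson mult_left_mono order_trans)
  finally have "m * ((n + 1) * p + n\<^sup>2 * T) \<le> m * (K * q)"
    by (simp add: algebra_simps)
  then show ?thesis
    using assms(2) by (simp add: K_def)
qed

lemma star_leaf_deficit_le:
  fixes a A b :: real
  assumes "A < a" "b < a"
  shows "(max a A - max b (max ((a + b) / 2) A))\<^sup>2 \<le> (a - A)\<^sup>2"
    and "(max a A - max b (max ((a + b) / 2) A))\<^sup>2 \<le> (a - b)\<^sup>2 / 4"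
proof -
  define c where "c = max ((a + b) / 2) A"
  have "(a + b) / 2 \<le> c" "A \<le> c" "c \<le> a"
    using assms by (auto simp: c_def)
  then have "0 \<le> a - c" "a - c \<le> a - A" "a - c \<le> (a - b) / 2"
    by (simp_all add: field_simps)
  then have "(a - c)\<^sup>2 \<le> (a - A)\<^sup>2" "(a - c)\<^sup>2 \<le> ((a - b) / 2)\<^sup>2"
    by (auto intro: power_mono)
  moreover have "max a A - max b (max ((a + b) / 2) A) = a - c"
    using assms by (simp add: c_def max_def)
  ultimately show "(max a A - max b (max ((a + b) / 2) A))\<^sup>2 \<le> (a - A)\<^sup>2"
    and "(max a A - max b (max ((a + b) / 2) A))\<^sup>2 \<le> (a - b)\<^sup>2 / 4"
    by (simp_all add: power_divide)
qed

lemma star_oscillation_bound_some_leaf_above_center: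
  fixes a A :: real and b t :: "'i \<Rightarrow> real"
  assumes "finite I" "2 \<le> card I"
  defines "n \<equiv> real (card I) + 1"
  assumes A: "n * A = a + sum b I" "A < a" and "\<exists>i\<in>I. a \<le> b i"
    and t: "\<And>i. i \<in> I \<Longrightarrow> b i < a \<Longrightarrow> t i \<le> (a - A)\<^sup>2"
  shows "(n + 1) * (\<Sum>i\<in>{i \<in> I. a \<le> b i}. (a - b i)\<^sup>2) + n\<^sup>2 * (\<Sum>i\<in>{i \<in> I. b i < a}. t i)
    \<le> (n\<^sup>2 - n - 1) * (\<Sum>i\<in>{i \<in> I. b i < a}. (a - b i)\<^sup>2)"
proof -
  define P where "P = {i \<in> I. a \<le> b i}"
  define Q where "Q = {i \<in> I. b i < a}"
  define m where "m = real (card Q)"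
  define x where "x = (\<Sum>i\<in>P. b i - a)"
  define y where "y = (\<Sum>i\<in>Q. a - b i)"
  have finite: "finite P" "finite Q"
    using assms(1) by (auto simp: P_def Q_def)
  have "I = P \<union> Q" "P \<inter> Q = {}"
    by (auto simp: P_def Q_def)
  then have split: "sum g I = sum g P + sum g Q" for g :: "'i \<Rightarrow> real"
    using finite by (simp add: sum.union_disjoint)
  have n3: "3 \<le> n"
    using assms(2) by (simp add: n_def)
  obtain j where "j \<in> I" "a \<le> b j"
    using assms(6) by blast
  then have "Q \<subset> I"
    unfolding Q_def by force
  then have "card Q < card I"
    using assms(1) by (rule psubset_card_mono[rotated])
  then have "m \<le> n - 2"
    by (simp add: m_def n_def)
  have "0 \<le> x"
    unfolding x_def by (intro sum_nonneg) (simp add: P_def)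
  have "x - y = (\<Sum>i\<in>I. b i - a)"
    unfolding split x_def y_def by (simp add: sum_subtractf)
  also have "\<dots> = n * (A - a)"
    using A by (simp add: sum_subtractf n_def algebra_simps)
  finally have yx: "y - x = n * (a - A)"
    by (simp add: algebra_simps)
  then have "x < y"
    using n3 \<open>A < a\<close> by (smt (verit) mult_pos_pos)
  then have "0 < m"
    using \<open>0 \<le> x\<close> finite by (auto simp: m_def y_def card_gt_0_iff)
  have "(\<Sum>i\<in>P. (a - b i)\<^sup>2) = (\<Sum>i\<in>P. (b i - a)\<^sup>2)"
    by (simp add: power2_commute)
  also have "\<dots> \<le> x\<^sup>2"
    unfolding x_def using finite by (intro sum_power2_le_power2_sum) (auto simp: P_def)
  finally have p_le: "(\<Sum>i\<in>P. (a - b i)\<^sup>2) \<le> x\<^sup>2" .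
  have y_le: "y\<^sup>2 \<le> m * (\<Sum>i\<in>Q. (a - b i)\<^sup>2)"
    using sum_squared_le_sum_of_squares[of "\<lambda>i. a - b i" Q]
    by (simp add: y_def m_def mult.commute)
  have "sum t Q \<le> m * (a - A)\<^sup>2"
    unfolding m_def using t sum_bounded_above[of Q t "(a - A)\<^sup>2"] by (simp add: Q_def)
  then have "n\<^sup>2 * sum t Q \<le> n\<^sup>2 * (m * (a - A)\<^sup>2)"
    by (simp add: mult_left_mono)
  also have "\<dots> = m * (y - x)\<^sup>2"
    unfolding yx by (simp add: power_mult_distrib)
  finally have T_le: "n\<^sup>2 * sum t Q \<le> m * (y - x)\<^sup>2" .
  show ?thesis
    unfolding P_def[symmetric] Q_def[symmetric]
    using n3 \<open>0 < m\<close> \<open>m \<le> n - 2\<close> \<open>0 \<le> x\<close> \<open>x < y\<close> p_le y_le T_le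
    by (intro center_dominant_estimate) auto
qed

lemma star_oscillation_bound_mean_less_center:
  fixes a A :: real and b :: "'i \<Rightarrow> real"
  assumes "finite I" "2 \<le> card I"
  defines "n \<equiv> real (card I) + 1"
  assumes A: "n * A = a + sum b I" and "A < a"
  shows "n\<^sup>2 * (\<Sum>i\<in>I. (max a A - max (b i) (max ((a + b i) / 2) A))\<^sup>2)
    \<le> (n\<^sup>2 - n - 1) * (\<Sum>i\<in>I. (a - b i)\<^sup>2)"
proof -
  define t where "t i = (max a A - max (b i) (max ((a + b i) / 2) A))\<^sup>2" for i
  define P where "P = {i \<in> I. a \<le> b i}"
  define Q where "Q = {i \<in> I. b i < a}"
  define p where "p = (\<Sum>i\<in>P. (a - b i)\<^sup>2)"
  define q where "q = (\<Sum>i\<in>Q. (a - b i)\<^sup>2)"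
  have "I = P \<union> Q" "P \<inter> Q = {}" "finite P" "finite Q"
    using assms(1) by (auto simp: P_def Q_def)
  then have split: "sum g I = sum g P + sum g Q" for g :: "'i \<Rightarrow> real"
    by (simp add: sum.union_disjoint)
  have "sum t P = p"
    unfolding p_def using \<open>A < a\<close> by (intro sum.cong) (auto simp: t_def P_def)
  have "(n + 1) * p + n\<^sup>2 * sum t Q \<le> (n\<^sup>2 - n - 1) * q"
  proof (cases "P = {}")
    case True
    have "3 \<le> n"
      using assms(2) by (simp add: n_def)
    then have "3 * n \<le> n * n"
      by (intro mult_right_mono) auto
    then have "n\<^sup>2 \<le> 4 * (n\<^sup>2 - n - 1)"
      unfolding power2_eq_square using \<open>3 \<le> n\<close> by (smt (verit))
    moreover have "sum t Q \<le> q / 4"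
      unfolding q_def sum_divide_distrib t_def using \<open>A < a\<close>
      by (intro sum_mono star_leaf_deficit_le) (auto simp: Q_def)
    moreover have "0 \<le> sum t Q"
      by (simp add: t_def sum_nonneg)
    ultimately have "n\<^sup>2 * sum t Q \<le> 4 * (n\<^sup>2 - n - 1) * (q / 4)"
      using zero_le_power2[of n] by (intro mult_mono) linarith+
    also have "\<dots> = (n\<^sup>2 - n - 1) * q"
      by simp
    finally show ?thesis
      using True by (simp add: p_def)
  next
    case False
    then have "\<exists>i\<in>I. a \<le> b i"
      by (auto simp: P_def)
    moreover have "t i \<le> (a - A)\<^sup>2" if "b i < a" for i
      unfolding t_def using \<open>A < a\<close> that by (rule star_leaf_deficit_le)
    ultimately show ?thesis
      using star_oscillation_bound_some_leaf_above_center[OF assms(1,2) A[unfolded n_def] \<open>A < a\<close>]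
      unfolding n_def p_def q_def P_def Q_def by blast
  qed
  then show ?thesis
    unfolding split \<open>sum t P = p\<close> t_def[symmetric] p_def[symmetric] q_def[symmetric]
    by (simp add: power2_eq_square algebra_simps)
qed

lemma star_oscillation_bound:
  fixes a A :: real and b :: "'i \<Rightarrow> real"
  assumes "finite I" "2 \<le> card I"
  defines "n \<equiv> real (card I) + 1"
  assumes A: "n * A = a + sum b I"
  shows "n\<^sup>2 * (\<Sum>i\<in>I. (max a A - max (b i) (max ((a + b i) / 2) A))\<^sup>2)
    \<le> (n\<^sup>2 - n - 1) * (\<Sum>i\<in>I. (a - b i)\<^sup>2)"
proof (cases "a \<le> A")
  case True
  define e where "e i = b i - A" for i
  have terms: "(max a A - max (b i) (max ((a + b i) / 2) A))\<^sup>2 = (max (e i) 0)\<^sup>2" for i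
    using True by (auto simp: e_def max_def power2_commute)
  have sum_e: "sum e I = A - a"
    using A by (simp add: e_def sum_subtractf n_def algebra_simps)
  have "(\<Sum>i\<in>I. (a - b i)\<^sup>2) = (\<Sum>i\<in>I. (e i)\<^sup>2 + 2 * (A - a) * e i + (A - a)\<^sup>2)"
    by (intro sum.cong) (auto simp: e_def power2_eq_square algebra_simps)
  also have "\<dots> = (\<Sum>i\<in>I. (e i)\<^sup>2) + 2 * (A - a) * sum e I + real (card I) * (A - a)\<^sup>2"
    by (simp add: sum.distrib sum_distrib_left)
  also have "\<dots> = (\<Sum>i\<in>I. (e i)\<^sup>2) + (n + 1) * (sum e I)\<^sup>2"
    by (simp add: sum_e n_def power2_eq_square algebra_simps)
  finally show ?thesis
    unfolding terms using sum_positive_part_power2_le[OF assms(1,2), of e] by (simp add: n_def)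
next
  case False
  then show ?thesis
    using star_oscillation_bound_mean_less_center[OF assms(1,2)] A by (simp add: n_def)
qed

lemma length_1_hd_eq_last: "length xs = 1 \<Longrightarrow> hd xs = last xs"
  by (cases xs) auto

lemma is_walk_length_2_edge:
  assumes "is_walk E xs" "length xs = 2"
  shows "{hd xs, last xs} \<in> E"
proof -
  obtain u v where "xs = [u, v]"
    using assms(2) by (auto simp: numeral_2_eq_2 length_Suc_conv)
  then show ?thesis
    using assms(1) by (auto simp: is_walk_def)
qed

lemma graph_dist_self: "graph_dist E u u = 0"
  unfolding graph_dist_def
  by (rule Least_eq_0) (rule exI[of _ "[u]"], simp add: is_walk_def)

lemma graph_dist_edge:
  assumes "u \<noteq> v" "{u, v} \<in> E"
  shows "graph_dist E u v = 1"
  unfolding graph_dist_def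
proof (rule Least_equality)
  show "\<exists>xs. is_walk E xs \<and> length xs = Suc 1 \<and> hd xs = u \<and> last xs = v"
    using assms(2) by (intro exI[of _ "[u, v]"]) (auto simp: is_walk_def less_Suc_eq)
next
  fix k assume "\<exists>xs. is_walk E xs \<and> length xs = Suc k \<and> hd xs = u \<and> last xs = v"
  then show "1 \<le> k"
    using assms(1) length_1_hd_eq_last by (cases k) force+
qed

lemma graph_dist_common_neighbour:
  assumes "u \<noteq> v" "{u, v} \<notin> E" "{u, w} \<in> E" "{w, v} \<in> E"
  shows "graph_dist E u v = 2"
  unfolding graph_dist_def
proof (rule Least_equality)
  show "\<exists>xs. is_walk E xs \<and> length xs = Suc 2 \<and> hd xs = u \<and> last xs = v"
    using assms(3,4) by (intro exI[of _ "[u, w, v]"]) (auto simp: is_walk_def less_Suc_eq)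
next
  fix k assume "\<exists>xs. is_walk E xs \<and> length xs = Suc k \<and> hd xs = u \<and> last xs = v"
  then obtain xs where xs: "is_walk E xs" "length xs = Suc k" "hd xs = u" "last xs = v"
    by blast
  show "2 \<le> k"
  proof (rule ccontr)
    assume "\<not> 2 \<le> k"
    then consider "k = 0" | "k = 1" by linarith
    then show False
      using xs assms(1,2) length_1_hd_eq_last is_walk_length_2_edge[of E xs] by cases auto
  qed
qed

lemma star_E_edge: "i \<in> {2..n} \<Longrightarrow> {1, i} \<in> star_E n"
  unfolding star_E_def by auto

lemma star_E_no_leaf_edge: "i \<in> {2..n} \<Longrightarrow> j \<in> {2..n} \<Longrightarrow> {i, j} \<notin> star_E n"
  unfolding star_E_def by (auto simp: doubleton_eq_iff)

lemma graph_dist_star: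
  assumes "u \<in> star_V n" "v \<in> star_V n"
  shows "graph_dist (star_E n) u v = (if u = v then 0 else if u = 1 \<or> v = 1 then 1 else 2)"
proof -
  consider "u = v" | "u \<noteq> v" "u = 1" | "u \<noteq> v" "v = 1" | "u \<noteq> v" "u \<noteq> 1" "v \<noteq> 1"
    by blast
  then show ?thesis
  proof cases
    case 1
    then show ?thesis by (simp add: graph_dist_self)
  next
    case 2
    then show ?thesis
      using assms star_E_edge[of v n] by (simp add: star_V_def graph_dist_edge)
  next
    case 3
    then show ?thesis
      using assms star_E_edge[of u n] by (simp add: star_V_def graph_dist_edge insert_commute)
  next
    case 4
    then have "u \<in> {2..n}" "v \<in> {2..n}"
      using assms by (auto simp: star_V_def)
    then show ?thesis
      using 4 star_E_edge[of u n] star_E_edge[of v n] star_E_no_leaf_edge[of u n v]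
      by (simp add: graph_dist_common_neighbour[of u v _ 1] insert_commute)
  qed
qed

lemma image_step_function_2: "(\<lambda>r::real. if r < 1 then X else Y) ` {0..} = {X, Y}"
  (is "?f ` _ = _")
proof
  show "{X, Y} \<subseteq> ?f ` {0..}"
    using image_mono[of "{0, 1}" "{0..}" ?f] by simp
qed auto

lemma image_step_function_3:
  "(\<lambda>r::real. if r < 1 then X else if r < 2 then Y else Z) ` {0..} = {X, Y, Z}"
  (is "?f ` _ = _")
proof
  show "{X, Y, Z} \<subseteq> ?f ` {0..}"
    using image_mono[of "{0, 1, 2}" "{0..}" ?f] by simp
qed auto

lemma star_balls_center:
  assumes "n \<ge> 1"
  shows "graph_ball (star_V n) (star_E n) 1 ` {0..} = {{1}, {1..n}}"
proof -
  have "graph_ball (star_V n) (star_E n) 1 ` {0..} = (\<lambda>r::real. if r < 1 then {1} else {1..n}) ` {0..}"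
    using assms
    by (intro image_cong) (auto simp: graph_ball_def star_V_def graph_dist_star split: if_splits)
  then show ?thesis
    by (simp only: image_step_function_2)
qed

lemma star_balls_leaf:
  assumes "i \<in> {2..n}"
  shows "graph_ball (star_V n) (star_E n) i ` {0..} = {{i}, {1, i}, {1..n}}"
proof -
  have "graph_ball (star_V n) (star_E n) i ` {0..}
      = (\<lambda>r::real. if r < 1 then {i} else if r < 2 then {1, i} else {1..n}) ` {0..}"
    using assms
    by (intro image_cong) (auto simp: graph_ball_def star_V_def graph_dist_star split: if_splits)
  then show ?thesis
    by (simp only: image_step_function_3)
qed

definition mean_abs :: "('a \<Rightarrow> real) \<Rightarrow> 'a set \<Rightarrow> real" where
  "mean_abs f S = (\<Sum>u\<in>S. \<bar>f u\<bar>) / real (card S)"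

lemma maximal_op_eq_Sup_mean_abs:
  "maximal_op V E f v = Sup (mean_abs f ` graph_ball V E v ` {0..})"
  unfolding maximal_op_def mean_abs_def image_image ..

lemma mean_abs_star_V:
  "n \<ge> 1 \<Longrightarrow> mean_abs f {1..n} = (\<bar>f 1\<bar> + (\<Sum>i=2..n. \<bar>f i\<bar>)) / real n"
  unfolding mean_abs_def by (simp add: sum.atLeast_Suc_atMost numeral_2_eq_2)

lemma maximal_op_star_center:
  assumes "n \<ge> 1"
  shows "maximal_op (star_V n) (star_E n) f 1 = max \<bar>f 1\<bar> (mean_abs f {1..n})"
  unfolding maximal_op_eq_Sup_mean_abs star_balls_center[OF assms]
  by (simp add: cSup_insert_If sup_max mean_abs_def)

lemma maximal_op_star_leaf:
  assumes "i \<in> {2..n}"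
  shows "maximal_op (star_V n) (star_E n) f i
    = max \<bar>f i\<bar> (max ((\<bar>f 1\<bar> + \<bar>f i\<bar>) / 2) (mean_abs f {1..n}))"
  using assms unfolding maximal_op_eq_Sup_mean_abs star_balls_leaf[OF assms]
  by (simp add: cSup_insert_If sup_max mean_abs_def)

lemma edge_diff_doubleton: "edge_diff g {x, y} = \<bar>g x - g y\<bar>"
  unfolding edge_diff_def
  by (rule the_equality) (auto simp: doubleton_eq_iff abs_minus_commute)

lemma var_p_2_star: "var_p (star_E n) 2 g = sqrt (\<Sum>i=2..n. (g 1 - g i)\<^sup>2)"
proof -
  have edges: "star_E n = (\<lambda>i. {1, i}) ` {2..n}"
    unfolding star_E_def by auto
  have "inj_on (\<lambda>i. {1::nat, i}) {2..n}"
    by (rule inj_onI) (auto simp: doubleton_eq_iff)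
  then have "(\<Sum>e\<in>star_E n. edge_diff g e powr 2) = (\<Sum>i=2..n. (g 1 - g i)\<^sup>2)"
    unfolding edges by (simp add: sum.reindex edge_diff_doubleton powr_numeral)
  then show ?thesis
    unfolding var_p_def by (simp add: powr_half_sqrt sum_nonneg)
qed

lemma var_p_2_maximal_op_star_le:
  assumes "3 \<le> n"
  shows "var_p (star_E n) 2 (maximal_op (star_V n) (star_E n) f)
    \<le> sqrt ((real n)\<^sup>2 - n - 1) / n * var_p (star_E n) 2 f"
proof -
  let ?M = "maximal_op (star_V n) (star_E n) f"
  define A where "A = mean_abs f {1..n}"
  define K where "K = (real n)\<^sup>2 - n - 1"
  have card: "real (card {2..n}) + 1 = real n"
    using assms by simp
  have "0 \<le> K"
    using star_constant_pos[of n] assms by (simp add: K_def)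
  have "?M 1 = max \<bar>f 1\<bar> A"
    unfolding A_def using assms by (intro maximal_op_star_center) simp
  then have "(\<Sum>i=2..n. (?M 1 - ?M i)\<^sup>2)
      = (\<Sum>i=2..n. (max \<bar>f 1\<bar> A - max \<bar>f i\<bar> (max ((\<bar>f 1\<bar> + \<bar>f i\<bar>) / 2) A))\<^sup>2)"
    by (intro sum.cong) (simp_all add: maximal_op_star_leaf A_def)
  also have "\<dots> \<le> K / (real n)\<^sup>2 * (\<Sum>i=2..n. (\<bar>f 1\<bar> - \<bar>f i\<bar>)\<^sup>2)"
  proof -
    have "real n * A = \<bar>f 1\<bar> + (\<Sum>i=2..n. \<bar>f i\<bar>)"
      unfolding A_def using assms mean_abs_star_V[of n f] by simp
    then show ?thesis
      using star_oscillation_bound[of "{2..n}" A "\<bar>f 1\<bar>" "\<lambda>i. \<bar>f i\<bar>", unfolded card] assms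
      by (simp add: K_def field_simps)
  qed
  also have "\<dots> \<le> K / (real n)\<^sup>2 * (\<Sum>i=2..n. (f 1 - f i)\<^sup>2)"
    using \<open>0 \<le> K\<close> abs_triangle_ineq3
    by (intro mult_left_mono sum_mono) (auto simp: abs_le_square_iff[symmetric])
  finally have "sqrt (\<Sum>i=2..n. (?M 1 - ?M i)\<^sup>2)
      \<le> sqrt (K / (real n)\<^sup>2 * (\<Sum>i=2..n. (f 1 - f i)\<^sup>2))"
    by (rule real_sqrt_le_mono)
  also have "\<dots> = sqrt K / n * sqrt (\<Sum>i=2..n. (f 1 - f i)\<^sup>2)"
    by (simp add: real_sqrt_mult real_sqrt_divide)
  finally show ?thesis
    unfolding var_p_2_star K_def .
qed

lemma var_p_2_maximal_op_star_extremal: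
  assumes "3 \<le> n"
  defines "f \<equiv> \<lambda>i::nat.
    if i = 1 then real n - 1 else if i = 2 then 2 * (real n - 1) else real n - 2"
  shows "var_p (star_E n) 2 f = sqrt ((real n)\<^sup>2 - n - 1)"
    and "var_p (star_E n) 2 (maximal_op (star_V n) (star_E n) f) = ((real n)\<^sup>2 - n - 1) / n"
proof -
  let ?M = "maximal_op (star_V n) (star_E n) f"
  define A where "A = mean_abs f {1..n}"
  have split: "(\<Sum>i=2..n. g i) = g 2 + (\<Sum>i=3..n. g i)" for g :: "nat \<Rightarrow> real"
    using assms(1) by (simp add: sum.atLeast_Suc_atMost numeral_3_eq_3 numeral_2_eq_2)
  have leaves: "(\<Sum>i=3..n. g i) = (real n - 2) * c" if "\<And>i. 3 \<le> i \<Longrightarrow> i \<le> n \<Longrightarrow> g i = c"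
    for g :: "nat \<Rightarrow> real" and c
    using assms(1) that by (simp add: of_nat_diff)
  have f_nonneg: "\<bar>f i\<bar> = f i" for i
    using assms(1) by (simp add: f_def)
  have "real n * A = \<bar>f 1\<bar> + (\<Sum>i=2..n. \<bar>f i\<bar>)"
    unfolding A_def using assms(1) mean_abs_star_V[of n f] by simp
  also have "\<dots> = (real n)\<^sup>2 - n + 1"
    unfolding split f_nonneg
    by (subst leaves[of _ "real n - 2"]) (auto simp: f_def power2_eq_square algebra_simps)
  finally have nA: "real n * A = (real n)\<^sup>2 - n + 1" .
  then have "A = real n - 1 + 1 / real n"
    using assms(1) by (simp add: field_simps power2_eq_square)
  moreover have "0 < 1 / real n" "1 / real n \<le> 1" "3 \<le> real n"
    using assms(1) by simp_all
  ultimately have A_bounds: "real n - 1 < A" "A \<le> 2 * real n - 2"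
    by linarith+
  have M_center: "?M 1 = A"
    using assms(1) maximal_op_star_center[of n f] A_bounds by (simp add: A_def f_def)
  have M_2: "?M 2 = 2 * (real n - 1)"
    using assms(1) maximal_op_star_leaf[of 2 n f] A_bounds by (simp add: A_def f_def max_def)
  have M_leaf: "?M i = A" if "3 \<le> i" "i \<le> n" for i
    using that maximal_op_star_leaf[of i n f] A_bounds by (simp add: A_def f_def max_def)
  show "var_p (star_E n) 2 f = sqrt ((real n)\<^sup>2 - n - 1)"
    unfolding var_p_2_star split
    by (subst leaves[of _ 1]) (auto simp: f_def power2_eq_square algebra_simps)
  have "(\<Sum>i=2..n. (?M 1 - ?M i)\<^sup>2) = (2 * (real n - 1) - A)\<^sup>2"
    unfolding split M_center M_2 by (subst leaves[of _ 0]) (auto simp: M_leaf power2_commute)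
  moreover have "((real n)\<^sup>2 - n - 1) / n = 2 * (real n - 1) - A"
    using nA assms(1) by (simp add: field_simps power2_eq_square)
  ultimately show "var_p (star_E n) 2 ?M = ((real n)\<^sup>2 - n - 1) / n"
    unfolding var_p_2_star using A_bounds by simp
qed

theorem theorem4p2:
  fixes n :: nat
  assumes "n \<ge> 3"
  shows "(\<forall>f :: nat \<Rightarrow> real.
            var_p (star_E n) 2 (maximal_op (star_V n) (star_E n) f)
              \<le> sqrt ((real n - 1)^2 + real n - 2) / real n * var_p (star_E n) 2 f)
       \<and> (\<forall>C :: real. C < sqrt ((real n - 1)^2 + real n - 2) / real n \<longrightarrow>
            (\<exists>f :: nat \<Rightarrow> real.
               var_p (star_E n) 2 (maximal_op (star_V n) (star_E n) f)
                 > C * var_p (star_E n) 2 f))"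
proof -
  define K where "K = (real n)\<^sup>2 - n - 1"
  have K: "(real n - 1)^2 + real n - 2 = K"
    by (simp add: K_def power2_eq_square algebra_simps)
  have "0 < K"
    using star_constant_pos[of n] assms by (simp add: K_def)
  show ?thesis
    unfolding K
  proof (intro conjI allI impI)
    fix f :: "nat \<Rightarrow> real"
    show "var_p (star_E n) 2 (maximal_op (star_V n) (star_E n) f) \<le> sqrt K / n * var_p (star_E n) 2 f"
      unfolding K_def using assms by (rule var_p_2_maximal_op_star_le)
  next
    fix C assume "C < sqrt K / n"
    obtain f :: "nat \<Rightarrow> real" where
      f: "var_p (star_E n) 2 f = sqrt K" "var_p (star_E n) 2 (maximal_op (star_V n) (star_E n) f) = K / n"
      using var_p_2_maximal_op_star_extremal[OF assms] unfolding K_def by blast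
    have "C * sqrt K < sqrt K / n * sqrt K"
      using \<open>C < sqrt K / n\<close> \<open>0 < K\<close> by (intro mult_strict_right_mono) auto
    also have "\<dots> = K / n"
      using \<open>0 < K\<close> by simp
    finally show "\<exists>f. C * var_p (star_E n) 2 f < var_p (star_E n) 2 (maximal_op (star_V n) (star_E n) f)"
      using f by metis
  qed
qed

end
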